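(* Let $k\in\mathbb{N}$ and $B\in\mathsf{PSD}_d^k$. Then the matrix $M_{k-1}(B)$ is positive semidefinite.
   Context: For $v\in\mathbb{C}^d$, $\sigma(v)$ is the number of nonzero coordinates. $\mathsf{PSD}_d^k$ is the set of matrices $\sum_{n\in I}|v_n\rangle\langle v_n|$ for finite families $v_n\in\mathbb{C}^d$ with $\sigma(v_n)\le k$. For $B\in\mathcal{M}_d(\mathbb{C})$ and $m\ge 0$, $M_m(B)$ is the matrix with $M_m(B)_{ii}=m|B_{ii}|$ and $M_m(B)_{ij}=-|B_{ij}|$ for $i\ne j$. *)

theory Defs
  imports "HOL-Analysis.Analysis"
begin

definition sigma :: "complex ^ 'd \<Rightarrow> nat" where
  "sigma v = card {i. v $ i \<noteq> 0}"

definition ketbra :: "complex ^ 'd \<Rightarrow> complex ^ 'd ^ 'd" where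
  "ketbra v = (\<chi> i j. v $ i * cnj (v $ j))"

definition PSDk :: "nat \<Rightarrow> (complex ^ 'd ^ 'd) set" where
  "PSDk k = {B. \<exists>(I :: nat set) v. finite I \<and> (\<forall>n\<in>I. sigma (v n) \<le> k)
                  \<and> B = (\<Sum>n\<in>I. ketbra (v n))}"

definition Mmat :: "real \<Rightarrow> complex ^ 'd ^ 'd \<Rightarrow> complex ^ 'd ^ 'd" where
  "Mmat m B = (\<chi> i j. if i = j then complex_of_real (m * cmod (B $ i $ i))
                       else - complex_of_real (cmod (B $ i $ j)))"

definition psd :: "complex ^ 'd ^ 'd \<Rightarrow> bool" where
  "psd A \<longleftrightarrow> (\<forall>i j. A $ i $ j = cnj (A $ j $ i)) \<and>
     (\<forall>x :: complex ^ 'd. let q = (\<Sum>i\<in>UNIV. \<Sum>j\<in>UNIV. cnj (x $ i) * A $ i $ j * x $ j)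
        in Im q = 0 \<and> Re q \<ge> 0)"

end

theory Submission
  imports Defs
begin

(* For y_i = |x_i| the real part of the quadratic form of M_m(B) at x is at least
   m * sum_i |B_ii| y_i^2 - sum_{i<>j} |B_ij| y_i y_j, so it suffices to bound the off-diagonal
   part by the diagonal one. Writing B = sum_n |v_n><v_n|, the triangle inequality splits both
   parts over n, and for a single vector a with at most k nonzero entries
   sum_{i<>j} a_i a_j = (sum_i a_i)^2 - sum_i a_i^2 <= (k - 1) sum_i a_i^2
   by Cauchy-Schwarz on the support of a. *)

definition hermitian :: "complex ^ 'd ^ 'd \<Rightarrow> bool" where
  "hermitian A \<longleftrightarrow> (\<forall>i j. A $ i $ j = cnj (A $ j $ i))"

definition qform :: "complex ^ 'd ^ 'd \<Rightarrow> complex ^ 'd \<Rightarrow> complex" where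
  "qform A x = (\<Sum>i\<in>UNIV. \<Sum>j\<in>UNIV. cnj (x $ i) * A $ i $ j * x $ j)"

lemma Im_qform_hermitian:
  assumes "hermitian A"
  shows "Im (qform A x) = 0"
proof -
  have cnj_entry: "cnj (A $ i $ j) = A $ j $ i" for i j
    using assms unfolding hermitian_def by (metis complex_cnj_cnj)
  have "cnj (qform A x) = (\<Sum>i\<in>UNIV. \<Sum>j\<in>UNIV. x $ i * cnj (A $ i $ j) * cnj (x $ j))"
    by (simp add: qform_def)
  also have "\<dots> = (\<Sum>j\<in>UNIV. \<Sum>i\<in>UNIV. x $ i * A $ j $ i * cnj (x $ j))"
    by (subst sum.swap) (simp add: cnj_entry)
  also have "\<dots> = qform A x"
    by (simp add: qform_def mult_ac)
  finally show ?thesis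
    by (metis Reals_cnj_iff complex_cnj_cancel_iff complex_is_Real_iff)
qed

lemma psd_iff_hermitian_Re_qform:
  "psd A \<longleftrightarrow> hermitian A \<and> (\<forall>x. 0 \<le> Re (qform A x))"
  unfolding psd_def Let_def qform_def[symmetric] hermitian_def[symmetric]
  using Im_qform_hermitian by blast

lemma sum_offdiag_products:
  fixes a :: "'i \<Rightarrow> 'a::comm_ring_1"
  assumes "finite S"
  shows "(\<Sum>i\<in>S. \<Sum>j\<in>S. if i = j then 0 else a i * a j) = (sum a S)^2 - (\<Sum>i\<in>S. (a i)^2)"
proof -
  have "(\<Sum>j\<in>S. if i = j then 0 else a i * a j) = a i * sum a S - (a i)^2" if "i \<in> S" for i
  proof -
    have "(\<Sum>j\<in>S. if i = j then 0 else a i * a j)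
        = (\<Sum>j\<in>S. a i * a j - (if i = j then a i * a j else 0))"
      by (rule sum.cong) auto
    then show ?thesis
      using assms that by (simp add: sum_subtractf sum_distrib_left power2_eq_square)
  qed
  then show ?thesis
    by (simp add: sum_subtractf sum_distrib_right power2_eq_square)
qed

lemma sum_offdiag_products_le_sparse:
  fixes a :: "'d::finite \<Rightarrow> real"
  assumes "card {i. a i \<noteq> 0} \<le> k"
  shows "(\<Sum>i\<in>UNIV. \<Sum>j\<in>UNIV. if i = j then 0 else a i * a j) \<le> (real k - 1) * (\<Sum>i\<in>UNIV. (a i)^2)"
proof -
  let ?S = "{i. a i \<noteq> 0}"
  have "(\<Sum>i\<in>UNIV. a i)^2 = (sum a ?S)^2"
    by (rule arg_cong[where f = "\<lambda>s. s^2"], rule sum.mono_neutral_right) auto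
  also have "\<dots> \<le> (\<Sum>i\<in>?S. (a i)^2) * real (card ?S)"
    by (rule sum_squared_le_sum_of_squares)
  also have "\<dots> \<le> (\<Sum>i\<in>?S. (a i)^2) * real k"
    using assms by (intro mult_left_mono) (auto intro: sum_nonneg)
  also have "(\<Sum>i\<in>?S. (a i)^2) = (\<Sum>i\<in>UNIV. (a i)^2)"
    by (rule sum.mono_neutral_left) auto
  finally have "(\<Sum>i\<in>UNIV. a i)^2 \<le> (\<Sum>i\<in>UNIV. (a i)^2) * real k" .
  moreover have "(\<Sum>i\<in>UNIV. \<Sum>j\<in>UNIV. if i = j then 0 else a i * a j)
      = (\<Sum>i\<in>UNIV. a i)^2 - (\<Sum>i\<in>UNIV. (a i)^2)"
    by (rule sum_offdiag_products) simp
  ultimately show ?thesis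
    by (simp add: algebra_simps)
qed

lemma hermitian_Mmat:
  assumes "hermitian B"
  shows "hermitian (Mmat m B)"
proof -
  have "cmod (B $ i $ j) = cmod (B $ j $ i)" for i j
    using assms unfolding hermitian_def by (metis complex_mod_cnj)
  then show ?thesis
    by (simp add: hermitian_def Mmat_def)
qed

lemma Re_qform_Mmat_ge:
  "m * (\<Sum>i\<in>UNIV. cmod (B $ i $ i) * (cmod (x $ i))^2)
     - (\<Sum>i\<in>UNIV. \<Sum>j\<in>UNIV. if i = j then 0 else cmod (B $ i $ j) * cmod (x $ i) * cmod (x $ j))
   \<le> Re (qform (Mmat m B) x)"
proof -
  have entry: "(if i = j then m * cmod (B $ i $ i) * (cmod (x $ i))^2 else 0)
      - (if i = j then 0 else cmod (B $ i $ j) * cmod (x $ i) * cmod (x $ j))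
      \<le> Re (cnj (x $ i) * Mmat m B $ i $ j * x $ j)" for i j
  proof (cases "i = j")
    case True
    have "Re (cnj (x $ i) * Mmat m B $ i $ i * x $ i)
        = m * cmod (B $ i $ i) * ((Re (x $ i))^2 + (Im (x $ i))^2)"
      by (simp add: Mmat_def algebra_simps power2_eq_square)
    with True show ?thesis
      by (simp only: cmod_power2) simp
  next
    case False
    have "Re (cnj (x $ i) * Mmat m B $ i $ j * x $ j) = - (cmod (B $ i $ j) * Re (cnj (x $ i) * x $ j))"
      using False by (simp add: Mmat_def algebra_simps)
    moreover have "Re (cnj (x $ i) * x $ j) \<le> cmod (x $ i) * cmod (x $ j)"
      by (metis complex_Re_le_cmod complex_mod_cnj norm_mult)
    ultimately show ?thesis
      using False by (simp add: mult_left_mono mult.assoc)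
  qed
  have "(\<Sum>i\<in>UNIV. \<Sum>j\<in>UNIV. (if i = j then m * cmod (B $ i $ i) * (cmod (x $ i))^2 else 0)
      - (if i = j then 0 else cmod (B $ i $ j) * cmod (x $ i) * cmod (x $ j)))
      \<le> Re (qform (Mmat m B) x)"
    unfolding qform_def Re_sum by (intro sum_mono entry)
  then show ?thesis
    by (simp add: sum_subtractf sum_distrib_left mult.assoc)
qed

lemma psd_MmatI:
  assumes "hermitian B"
    and offdiag_le: "\<And>y. (\<And>i. 0 \<le> y i) \<Longrightarrow>
      (\<Sum>i\<in>UNIV. \<Sum>j\<in>UNIV. if i = j then 0 else cmod (B $ i $ j) * y i * y j)
        \<le> m * (\<Sum>i\<in>UNIV. cmod (B $ i $ i) * (y i)^2)"
  shows "psd (Mmat m B)"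
  unfolding psd_iff_hermitian_Re_qform
proof (intro conjI allI)
  show "hermitian (Mmat m B)"
    using assms(1) by (rule hermitian_Mmat)
  fix x
  show "0 \<le> Re (qform (Mmat m B) x)"
    using offdiag_le[of "\<lambda>i. cmod (x $ i)"] Re_qform_Mmat_ge[of m B x] by simp
qed

lemma ketbra_sum_entry:
  "(\<Sum>n\<in>I. ketbra (v n)) $ i $ j = (\<Sum>n\<in>I. v n $ i * cnj (v n $ j))"
  by (simp add: ketbra_def)

lemma hermitian_ketbra_sum: "hermitian (\<Sum>n\<in>I. ketbra (v n))"
  unfolding hermitian_def ketbra_sum_entry by (simp add: mult.commute)

lemma norm_ketbra_sum_diag:
  "cmod ((\<Sum>n\<in>I. ketbra (v n)) $ i $ i) = (\<Sum>n\<in>I. (cmod (v n $ i))^2)"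
proof -
  have "(\<Sum>n\<in>I. ketbra (v n)) $ i $ i = of_real (\<Sum>n\<in>I. (cmod (v n $ i))^2)"
    unfolding ketbra_sum_entry of_real_sum
    by (intro sum.cong refl) (metis complex_norm_square of_real_power)
  moreover have "0 \<le> (\<Sum>n\<in>I. (cmod (v n $ i))^2)"
    by (simp add: sum_nonneg)
  ultimately show ?thesis
    by (simp only: norm_of_real abs_of_nonneg)
qed

lemma norm_ketbra_sum_le:
  "cmod ((\<Sum>n\<in>I. ketbra (v n)) $ i $ j) \<le> (\<Sum>n\<in>I. cmod (v n $ i) * cmod (v n $ j))"
  unfolding ketbra_sum_entry by (rule order_trans[OF norm_sum]) (simp add: norm_mult)

lemma ketbra_sum_offdiag_le:
  fixes v :: "nat \<Rightarrow> complex ^ 'd" and y :: "'d \<Rightarrow> real"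
  assumes sparse: "\<forall>n\<in>I. sigma (v n) \<le> k"
    and y_nonneg: "\<And>i. 0 \<le> y i"
  defines "B \<equiv> \<Sum>n\<in>I. ketbra (v n)"
  shows "(\<Sum>i\<in>UNIV. \<Sum>j\<in>UNIV. if i = j then 0 else cmod (B $ i $ j) * y i * y j)
    \<le> (real k - 1) * (\<Sum>i\<in>UNIV. cmod (B $ i $ i) * (y i)^2)"
proof -
  define a where "a n i = cmod (v n $ i) * y i" for n i
  have entry: "(if i = j then 0 else cmod (B $ i $ j) * y i * y j)
      \<le> (\<Sum>n\<in>I. if i = j then 0 else a n i * a n j)" for i j
  proof (cases "i = j")
    case False
    have "cmod (B $ i $ j) * y i * y j \<le> (\<Sum>n\<in>I. cmod (v n $ i) * cmod (v n $ j)) * (y i * y j)"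
      unfolding B_def mult.assoc by (intro mult_right_mono norm_ketbra_sum_le) (simp add: y_nonneg)
    with False show ?thesis
      by (simp add: a_def sum_distrib_left mult_ac)
  qed simp
  have sparse_a: "card {i. a n i \<noteq> 0} \<le> k" if "n \<in> I" for n
  proof -
    have "{i. a n i \<noteq> 0} \<subseteq> {i. v n $ i \<noteq> 0}"
      by (auto simp: a_def)
    then show ?thesis
      using sparse that unfolding sigma_def by (meson card_mono finite order_trans)
  qed
  have "(\<Sum>i\<in>UNIV. \<Sum>j\<in>UNIV. if i = j then 0 else cmod (B $ i $ j) * y i * y j)
      \<le> (\<Sum>i\<in>UNIV. \<Sum>j\<in>UNIV. \<Sum>n\<in>I. if i = j then 0 else a n i * a n j)"
    by (intro sum_mono entry)
  also have "\<dots> = (\<Sum>i\<in>UNIV. \<Sum>n\<in>I. \<Sum>j\<in>UNIV. if i = j then 0 else a n i * a n j)"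
    by (intro sum.cong refl sum.swap)
  also have "\<dots> = (\<Sum>n\<in>I. \<Sum>i\<in>UNIV. \<Sum>j\<in>UNIV. if i = j then 0 else a n i * a n j)"
    by (rule sum.swap)
  also have "\<dots> \<le> (\<Sum>n\<in>I. (real k - 1) * (\<Sum>i\<in>UNIV. (a n i)^2))"
    by (intro sum_mono sum_offdiag_products_le_sparse sparse_a)
  also have "\<dots> = (real k - 1) * (\<Sum>n\<in>I. \<Sum>i\<in>UNIV. (a n i)^2)"
    by (simp add: sum_distrib_left)
  also have "(\<Sum>n\<in>I. \<Sum>i\<in>UNIV. (a n i)^2) = (\<Sum>i\<in>UNIV. cmod (B $ i $ i) * (y i)^2)"
    unfolding B_def norm_ketbra_sum_diag a_def power_mult_distrib sum_distrib_right
    by (rule sum.swap)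
  finally show ?thesis .
qed

theorem proposition3p11:
  fixes B :: "complex ^ 'd ^ 'd" and k :: nat
  assumes "1 \<le> k"
    and "B \<in> PSDk k"
  shows "psd (Mmat (real k - 1) B)"
proof -
  obtain I :: "nat set" and v where sparse: "\<forall>n\<in>I. sigma (v n) \<le> k"
    and B: "B = (\<Sum>n\<in>I. ketbra (v n))"
    using assms(2) unfolding PSDk_def by blast
  show ?thesis
    unfolding B
    by (rule psd_MmatI[OF hermitian_ketbra_sum ketbra_sum_offdiag_le[OF sparse]])
qed

end
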